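(* For every $\beta>1$ there is a constant $C(\beta)$ such that for all integers $j\ge1$, $$\sum_{l\ge1}\frac{1}{(1+|j-l|)(1+\ln l)^\beta}\le C(\beta).$$ *)

theory Defs
  imports Complex_Main
begin

end

theory Submission
  imports Defs "HOL-Analysis.Analysis"
begin

text \<open>Split the range of l into three regions. For 2l \<le> j there are at most j/2 terms, each at
  most 2/j. For j/2 < l < 2j the logarithmic weight is comparable to (1 + ln j)^\<beta>, while the
  distance factors sum to at most twice the j-th harmonic number, i.e. to O(1 + ln j); as
  \<beta> \<ge> 1 the product stays bounded. For l \<ge> 2j the term is at most 2 / (l (1 + ln l)^\<beta>), whose
  series converges for \<beta> > 1 by Cauchy condensation.\<close>

lemma inverse_Suc_le_ln_diff:
  assumes "n \<ge> 1"
  shows "1 / (real n + 1) \<le> ln (real n + 1) - ln (real n)"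
proof -
  have "ln (real n / (real n + 1)) \<le> real n / (real n + 1) - 1"
    by (rule ln_le_minus_one) (use assms in simp)
  also have "real n / (real n + 1) - 1 = - (1 / (real n + 1))"
    by (simp add: field_simps)
  finally show ?thesis
    using assms by (simp add: ln_div)
qed

lemma harm_le_one_plus_ln:
  assumes "n \<ge> 1"
  shows "harm n \<le> 1 + ln (real n)"
  using assms
proof (induction n rule: dec_induct)
  case base
  then show ?case by (simp add: harm_def)
next
  case (step n)
  have "harm (Suc n) = harm n + 1 / (real n + 1)"
    by (simp add: harm_Suc add.commute divide_inverse)
  also have "\<dots> \<le> 1 + ln (real n) + (ln (real n + 1) - ln (real n))"
    using step inverse_Suc_le_ln_diff[of n] by linarith
  finally show ?case
    by (simp add: add.commute)
qed

lemma sum_inverse_one_plus_dist_le_harm: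
  "(\<Sum>l\<in>{1..2*j}. 1 / (1 + \<bar>real j - real l\<bar>)) \<le> 2 * harm j"
proof -
  let ?f = "\<lambda>l::nat. 1 / (1 + \<bar>real j - real l\<bar>)"
  have split: "{1..2*j} = {1..j} \<union> {Suc j..2*j}"
    by auto
  have "sum ?f {1..2*j} = sum ?f {1..j} + sum ?f {Suc j..2*j}"
    unfolding split by (rule sum.union_disjoint) auto
  moreover have "sum ?f {1..j} = harm j"
    unfolding harm_def
    by (rule sum.reindex_bij_witness[where i = "\<lambda>k. Suc j - k" and j = "\<lambda>l. Suc j - l"])
       (auto simp: divide_inverse)
  moreover have "sum ?f {Suc j..2*j} \<le> (\<Sum>l\<in>{Suc j..2*j}. 1 / real (l - j))"
    by (intro sum_mono divide_left_mono) auto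
  moreover have "(\<Sum>l\<in>{Suc j..2*j}. 1 / real (l - j)) = harm j"
    unfolding harm_def
    by (rule sum.reindex_bij_witness[where i = "\<lambda>k. k + j" and j = "\<lambda>l. l - j"])
       (auto simp: divide_inverse)
  ultimately show ?thesis
    by linarith
qed

lemma summable_inverse_mult_one_plus_ln_powr:
  fixes \<beta> :: real
  assumes "\<beta> > 1"
  shows "summable (\<lambda>n::nat. 1 / (real n * (1 + ln (real n)) powr \<beta>))" (is "summable ?h")
proof (subst condensation_test)
  fix m :: nat
  assume m: "0 < m"
  then have "0 < 1 + ln (real m)"
    by (simp add: add_pos_nonneg)
  then have "0 < real m * (1 + ln (real m)) powr \<beta>"
    using m by simp
  moreover have "real m * (1 + ln (real m)) powr \<beta> \<le> real (Suc m) * (1 + ln (real (Suc m))) powr \<beta>"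
    using m assms by (intro mult_mono powr_mono2) auto
  ultimately show "?h (Suc m) \<le> ?h m"
    by (intro divide_left_mono) auto
next
  show "0 \<le> ?h n" for n
    by auto
next
  show "summable (\<lambda>n. 2 ^ n * ?h (2 ^ n))"
  proof (rule summable_comparison_test')
    show "summable (\<lambda>n::nat. ln 2 powr (-\<beta>) * real n powr (-\<beta>))"
      using assms by (intro summable_mult) (simp add: summable_real_powr_iff)
  next
    fix n :: nat
    assume n: "1 \<le> n"
    have "0 < 1 + real n * ln 2"
      by (intro add_pos_nonneg) auto
    have "2 ^ n * ?h (2 ^ n) = 1 / (1 + real n * ln 2) powr \<beta>"
      by (simp add: ln_realpow)
    also have "\<dots> \<le> 1 / (ln 2 * real n) powr \<beta>"
      using n assms \<open>0 < 1 + real n * ln 2\<close>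
      by (intro divide_left_mono powr_mono2 mult_pos_pos) auto
    also have "\<dots> = ln 2 powr (-\<beta>) * real n powr (-\<beta>)"
      by (simp add: powr_mult powr_minus divide_inverse)
    finally show "norm (2 ^ n * ?h (2 ^ n)) \<le> ln 2 powr (-\<beta>) * real n powr (-\<beta>)"
      by simp
  qed
qed

definition log_kernel :: "real \<Rightarrow> nat \<Rightarrow> nat \<Rightarrow> real" where
  "log_kernel \<beta> j l = 1 / ((1 + \<bar>real j - real l\<bar>) * (1 + ln (real l)) powr \<beta>)"

lemma log_kernel_nonneg: "0 \<le> log_kernel \<beta> j l"
  by (simp add: log_kernel_def)

lemma one_le_one_plus_ln_powr:
  assumes "l \<ge> 1" and "\<beta> \<ge> 0"
  shows "1 \<le> (1 + ln (real l)) powr \<beta>"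
  using assms by (intro ge_one_powr_ge_zero) auto

lemma log_kernel_le_left:
  assumes "l \<ge> 1" "2 * l \<le> j" "\<beta> \<ge> 0"
  shows "log_kernel \<beta> j l \<le> 2 / real j"
proof -
  have "real j / 2 \<le> 1 + \<bar>real j - real l\<bar>"
    using assms(2) by linarith
  also have "\<dots> \<le> (1 + \<bar>real j - real l\<bar>) * (1 + ln (real l)) powr \<beta>"
    using mult_left_mono[OF one_le_one_plus_ln_powr[OF assms(1,3)], of "1 + \<bar>real j - real l\<bar>"]
    by simp
  finally have "real j / 2 \<le> (1 + \<bar>real j - real l\<bar>) * (1 + ln (real l)) powr \<beta>" .
  moreover have "0 < real j / 2"
    using assms(1,2) by simp
  ultimately show ?thesis
    unfolding log_kernel_def using divide_left_mono[of "real j / 2" _ 1] by simp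
qed

lemma one_minus_ln2_mult_le_one_plus_ln:
  assumes "j \<ge> 1" "j < 2 * l"
  shows "(1 - ln 2) * (1 + ln (real j)) \<le> 1 + ln (real l)"
proof -
  have "ln (real j / 2) \<le> ln (real l)"
    using assms by (subst ln_le_cancel_iff) auto
  then have "ln (real j) - ln 2 \<le> ln (real l)"
    using assms(1) by (simp add: ln_div)
  moreover have "0 \<le> ln 2 * ln (real j)"
    using assms(1) by simp
  ultimately show ?thesis
    by (simp add: algebra_simps)
qed

lemma log_kernel_le_middle:
  assumes "j \<ge> 1" "j < 2 * l" "\<beta> \<ge> 0"
  shows "log_kernel \<beta> j l \<le> 1 / ((1 + \<bar>real j - real l\<bar>) * ((1 - ln 2) * (1 + ln (real j))) powr \<beta>)"
proof -
  have "0 < 1 - ln (2::real)"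
    using ln_2_less_1 by simp
  moreover have "0 \<le> ln (real j)"
    using assms(1) by simp
  ultimately have "0 < (1 - ln 2) * (1 + ln (real j))"
    by (simp add: add_pos_nonneg)
  moreover have "0 < 1 + ln (real l)"
    using calculation one_minus_ln2_mult_le_one_plus_ln[OF assms(1,2)] by linarith
  ultimately show ?thesis
    using assms unfolding log_kernel_def
    by (intro divide_left_mono mult_left_mono mult_pos_pos powr_mono2
          one_minus_ln2_mult_le_one_plus_ln) auto
qed

lemma log_kernel_le_right:
  assumes "l \<ge> 1" "2 * j \<le> l" "\<beta> \<ge> 0"
  shows "log_kernel \<beta> j l \<le> 2 / (real l * (1 + ln (real l)) powr \<beta>)"
proof -
  have "0 < (1 + ln (real l)) powr \<beta>"
    using one_le_one_plus_ln_powr[OF assms(1,3)] by linarith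
  moreover have "real l / 2 \<le> 1 + \<bar>real j - real l\<bar>"
    using assms(2) by linarith
  ultimately have "1 / ((1 + \<bar>real j - real l\<bar>) * (1 + ln (real l)) powr \<beta>)
      \<le> 1 / (real l / 2 * (1 + ln (real l)) powr \<beta>)"
    using assms(1) by (intro divide_left_mono mult_right_mono mult_pos_pos) auto
  then show ?thesis
    by (simp add: log_kernel_def)
qed

lemma sum_log_kernel_left_le:
  assumes "A \<subseteq> {l. 1 \<le> l \<and> 2 * l \<le> j}" "\<beta> \<ge> 0"
  shows "sum (log_kernel \<beta> j) A \<le> 1"
proof (cases "j = 0")
  case True
  with assms(1) have "A = {}"
    by auto
  then show ?thesis
    by simp
next
  case False
  have "A \<subseteq> {1..j div 2}"
    using assms(1) by auto
  then have "card A \<le> j div 2"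
    using card_mono[of "{1..j div 2}" A] by simp
  then have card: "2 * real (card A) \<le> real j"
    by linarith
  have "sum (log_kernel \<beta> j) A \<le> sum (\<lambda>_. 2 / real j) A"
    using assms by (intro sum_mono log_kernel_le_left) auto
  also have "\<dots> = real (card A) * 2 / real j"
    by simp
  also have "\<dots> \<le> 1"
    using card False by (simp add: divide_simps)
  finally show ?thesis .
qed

lemma sum_log_kernel_middle_le:
  assumes "B \<subseteq> {l. j < 2 * l \<and> l \<le> 2 * j}" "j \<ge> 1" "\<beta> \<ge> 1"
  shows "sum (log_kernel \<beta> j) B \<le> 2 / (1 - ln 2) powr \<beta>"
proof -
  define x where "x = 1 + ln (real j)"
  define c where "c = 1 / ((1 - ln 2) * x) powr \<beta>"
  have x: "1 \<le> x"
    using assms(2) by (simp add: x_def)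
  have ln2: "0 < 1 - ln (2::real)"
    using ln_2_less_1 by simp
  have "sum (log_kernel \<beta> j) B \<le> (\<Sum>l\<in>B. c * (1 / (1 + \<bar>real j - real l\<bar>)))"
  proof (rule sum_mono)
    fix l
    assume "l \<in> B"
    then show "log_kernel \<beta> j l \<le> c * (1 / (1 + \<bar>real j - real l\<bar>))"
      using assms log_kernel_le_middle[of j l \<beta>] by (auto simp: c_def x_def mult.commute)
  qed
  also have "\<dots> \<le> (\<Sum>l\<in>{1..2*j}. c * (1 / (1 + \<bar>real j - real l\<bar>)))"
    using assms(1) ln2 x by (intro sum_mono2) (auto simp: c_def)
  also have "\<dots> = c * (\<Sum>l\<in>{1..2*j}. 1 / (1 + \<bar>real j - real l\<bar>))"
    by (simp add: sum_distrib_left)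
  also have "\<dots> \<le> c * (2 * x)"
    using sum_inverse_one_plus_dist_le_harm[of j] harm_le_one_plus_ln[OF assms(2)] ln2 x
    by (intro mult_left_mono) (auto simp: c_def x_def)
  also have "\<dots> = 2 / (1 - ln 2) powr \<beta> * (x / x powr \<beta>)"
    using ln2 x by (simp add: c_def powr_mult)
  also have "\<dots> \<le> 2 / (1 - ln 2) powr \<beta>"
    using ln2 x powr_mono[of 1 \<beta> x] assms(3) by (intro mult_right_le_one_le) auto
  finally show ?thesis .
qed

lemma sum_log_kernel_right_le:
  assumes "D \<subseteq> {l. 1 \<le> l \<and> 2 * j \<le> l}" "finite D" "\<beta> > 1"
  shows "sum (log_kernel \<beta> j) D \<le> 2 * (\<Sum>n. 1 / (real n * (1 + ln (real n)) powr \<beta>))"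
proof -
  let ?h = "\<lambda>n::nat. 1 / (real n * (1 + ln (real n)) powr \<beta>)"
  have "sum (log_kernel \<beta> j) D \<le> (\<Sum>l\<in>D. 2 * ?h l)"
    using assms by (intro sum_mono order.trans[OF log_kernel_le_right]) auto
  also have "\<dots> = 2 * sum ?h D"
    by (simp add: sum_distrib_left)
  also have "sum ?h D \<le> (\<Sum>n. ?h n)"
    using assms summable_inverse_mult_one_plus_ln_powr by (intro sum_le_suminf) auto
  finally show ?thesis
    by simp
qed

lemma sum_log_kernel_le:
  assumes "j \<ge> 1" "\<beta> > 1"
  shows "(\<Sum>l\<in>{1..M}. log_kernel \<beta> j l)
    \<le> 1 + 2 / (1 - ln 2) powr \<beta> + 2 * (\<Sum>n. 1 / (real n * (1 + ln (real n)) powr \<beta>))"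
proof -
  define A where "A = {l\<in>{1..M}. 2 * l \<le> j}"
  define B where "B = {l\<in>{1..M}. j < 2 * l \<and> l < 2 * j}"
  define D where "D = {l\<in>{1..M}. 2 * j \<le> l}"
  have split: "{1..M} = (A \<union> B) \<union> D"
    by (auto simp: A_def B_def D_def)
  have "finite A" "finite B" "finite D" "A \<inter> B = {}" "(A \<union> B) \<inter> D = {}"
    by (auto simp: A_def B_def D_def)
  then have "(\<Sum>l\<in>{1..M}. log_kernel \<beta> j l)
      = sum (log_kernel \<beta> j) A + sum (log_kernel \<beta> j) B + sum (log_kernel \<beta> j) D"
    unfolding split by (simp add: sum.union_disjoint)
  also have "\<dots> \<le> 1 + 2 / (1 - ln 2) powr \<beta> + 2 * (\<Sum>n. 1 / (real n * (1 + ln (real n)) powr \<beta>))"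
  proof (intro add_mono)
    show "sum (log_kernel \<beta> j) A \<le> 1"
      using assms by (intro sum_log_kernel_left_le) (auto simp: A_def)
    show "sum (log_kernel \<beta> j) B \<le> 2 / (1 - ln 2) powr \<beta>"
      using assms by (intro sum_log_kernel_middle_le) (auto simp: B_def)
    show "sum (log_kernel \<beta> j) D \<le> 2 * (\<Sum>n. 1 / (real n * (1 + ln (real n)) powr \<beta>))"
      using assms \<open>finite D\<close> by (intro sum_log_kernel_right_le) (auto simp: D_def)
  qed
  finally show ?thesis .
qed

theorem lemma7p1:
  fixes \<beta> :: real
  assumes "\<beta> > 1"
  shows "\<exists>C::real. \<forall>j::nat. j \<ge> 1 \<longrightarrow>
           summable (\<lambda>n::nat. let l = Suc n in
              1 / ((1 + \<bar>real j - real l\<bar>) * (1 + ln (real l)) powr \<beta>))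
         \<and> (\<Sum>n. let l = Suc n in
              1 / ((1 + \<bar>real j - real l\<bar>) * (1 + ln (real l)) powr \<beta>)) \<le> C"
proof -
  define C where "C = 1 + 2 / (1 - ln 2) powr \<beta>
    + 2 * (\<Sum>n. 1 / (real n * (1 + ln (real n)) powr \<beta>))"
  have terms: "(\<lambda>n::nat. let l = Suc n in
      1 / ((1 + \<bar>real j - real l\<bar>) * (1 + ln (real l)) powr \<beta>)) = (\<lambda>n. log_kernel \<beta> j (Suc n))"
    for j :: nat
    by (simp add: log_kernel_def Let_def)
  show ?thesis
    unfolding terms
  proof (intro exI allI impI)
    fix j :: nat
    assume j: "j \<ge> 1"
    have partial_sums: "(\<Sum>n<M. log_kernel \<beta> j (Suc n)) \<le> C" for M
      using sum_log_kernel_le[OF j assms, of M] by (simp add: C_def sum.atLeast1_atMost_eq)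
    moreover have "summable (\<lambda>n. log_kernel \<beta> j (Suc n))"
      using partial_sums log_kernel_nonneg by (intro summableI_nonneg_bounded) auto
    ultimately show "summable (\<lambda>n. log_kernel \<beta> j (Suc n)) \<and> (\<Sum>n. log_kernel \<beta> j (Suc n)) \<le> C"
      by (simp add: suminf_le_const)
  qed
qed

end
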